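(* For a $*$-ring $R$ the following are equivalent: (1) $R$ is a generalized p.q.-Baer $*$-ring; (2) $R$ is a weakly generalized p.q.-Baer $*$-ring with unity.
   Context: A $*$-ring is a ring with an involution; a projection is $e$ with $e=e^*=e^2$. $r_R(S)=\{a\in R: sa=0\ \forall s\in S\}$. $R$ is a generalized p.q.-Baer $*$-ring if for every $x\in R$ there are $n\in\mathbb N$ and a projection $e$ with $r_R((xR)^n)=eR$. $R$ is a weakly generalized p.q.-Baer $*$-ring if for every $x\in R$ there exist a central projection $e$ and $n\in\mathbb N$ such that $x^ne=x^n$ and, for all $y\in R$, $(xR)^ny=\{0\}$ iff $ey=0$. *)

theory Defs
  imports Main
begin

definition is_involution :: "('a::ring \<Rightarrow> 'a) \<Rightarrow> bool" where
  "is_involution s \<longleftrightarrow>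
     (\<forall>x y. s (x + y) = s x + s y) \<and>
     (\<forall>x y. s (x * y) = s y * s x) \<and>
     (\<forall>x. s (s x) = x)"

definition is_projection :: "('a::ring \<Rightarrow> 'a) \<Rightarrow> 'a \<Rightarrow> bool" where
  "is_projection s e \<longleftrightarrow> e = s e \<and> e = e * e"

definition is_central :: "'a::ring \<Rightarrow> bool" where
  "is_central e \<longleftrightarrow> (\<forall>a. e * a = a * e)"

text \<open>Positive powers of an element in a (possibly non-unital) ring; rpow x n is x^(n) for n >= 1.\<close>
fun rpow :: "'a::ring \<Rightarrow> nat \<Rightarrow> 'a" where
  "rpow x 0 = 0"
| "rpow x (Suc 0) = x"
| "rpow x (Suc (Suc n)) = x * rpow x (Suc n)"

fun spow :: "'a::ring set \<Rightarrow> nat \<Rightarrow> 'a set" where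
  "spow S 0 = {0}"
| "spow S (Suc 0) = S"
| "spow S (Suc (Suc n)) = {a * b | a b. a \<in> S \<and> b \<in> spow S (Suc n)}"

definition right_ideal_gen :: "'a::ring \<Rightarrow> 'a set" where
  "right_ideal_gen x = {x * r | r. True}"

definition r_ann :: "'a::ring set \<Rightarrow> 'a set" where
  "r_ann S = {a. \<forall>s\<in>S. s * a = 0}"

definition gen_pq_baer :: "('a::ring \<Rightarrow> 'a) \<Rightarrow> bool" where
  "gen_pq_baer s \<longleftrightarrow>
     (\<forall>x. \<exists>n e. n \<ge> 1 \<and> is_projection s e \<and>
        r_ann (spow (right_ideal_gen x) n) = right_ideal_gen e)"

definition weakly_gen_pq_baer :: "('a::ring \<Rightarrow> 'a) \<Rightarrow> bool" where
  "weakly_gen_pq_baer s \<longleftrightarrow>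
     (\<forall>x. \<exists>e n. n \<ge> 1 \<and> is_projection s e \<and> is_central e \<and>
        rpow x n * e = rpow x n \<and>
        (\<forall>y. ((\<forall>a\<in>spow (right_ideal_gen x) n. a * y = 0) \<longleftrightarrow> e * y = 0)))"

definition has_unity :: "'a::ring itself \<Rightarrow> bool" where
  "has_unity _ \<longleftrightarrow> (\<exists>u::'a. \<forall>x. u * x = x \<and> x * u = x)"

end

theory Submission
  imports Defs
begin

text \<open>Both notions describe the same right annihilator: r(xR)^n = eR for a projection e holds
  exactly when f = 1 - e is a projection with fy = 0 iff y is annihilated by (xR)^n. Going from
  the generalized to the weak form, the unity comes from x = 0, whose annihilator is the whole
  ring, and centrality of e comes from r(xR)^n being a two-sided ideal generated by a projection.\<close>

lemma involution_diff:
  assumes "is_involution s"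
  shows "s (a - b) = s a - s b"
proof -
  have "s a = s (a - b) + s b"
    using assms unfolding is_involution_def by (metis diff_add_cancel)
  then show ?thesis by simp
qed

lemma involution_fixes_unity:
  assumes "is_involution s" and "\<And>y. u * y = y" and "\<And>y. y * u = y"
  shows "s u = u"
proof -
  have "u = s (s u * u)"
    using assms(1,3) by (simp add: is_involution_def)
  also have "\<dots> = s u * u"
    using assms(1) by (simp add: is_involution_def)
  also have "\<dots> = s u"
    using assms(3) .
  finally show ?thesis ..
qed

lemma projection_complement:
  assumes "is_involution s" and "\<And>y. u * y = y" and "\<And>y. y * u = y"
    and "is_projection s e"
  shows "is_projection s (u - e)"
proof -
  have "s (u - e) = u - e"
    using involution_diff[OF assms(1)] involution_fixes_unity[OF assms(1-3)] assms(4)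
    by (simp add: is_projection_def)
  moreover have "(u - e) * (u - e) = u - e"
    using assms(2,3,4) by (simp add: is_projection_def algebra_simps)
  ultimately show ?thesis
    by (simp add: is_projection_def)
qed

lemma central_complement:
  assumes "\<And>y. u * y = y" and "\<And>y. y * u = y" and "is_central e"
  shows "is_central (u - e)"
  using assms by (simp add: is_central_def algebra_simps)

lemma right_ideal_gen_idempotent_iff:
  assumes "e * e = e"
  shows "y \<in> right_ideal_gen e \<longleftrightarrow> e * y = y"
proof
  assume "y \<in> right_ideal_gen e"
  then obtain r where "y = e * r"
    by (auto simp: right_ideal_gen_def)
  then show "e * y = y"
    using assms by (simp add: mult.assoc[symmetric])
next
  assume "e * y = y"
  then show "y \<in> right_ideal_gen e"
    unfolding right_ideal_gen_def by (metis (mono_tags) mem_Collect_eq)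
qed

lemma r_ann_eq_right_ideal_gen_iff:
  assumes "\<And>y. u * y = y" and "e * e = e"
  shows "r_ann S = right_ideal_gen e \<longleftrightarrow> (\<forall>y. (\<forall>a\<in>S. a * y = 0) \<longleftrightarrow> (u - e) * y = 0)"
proof -
  have "(u - e) * y = 0 \<longleftrightarrow> y \<in> right_ideal_gen e" for y
    using right_ideal_gen_idempotent_iff[OF assms(2)] assms(1)
    by (auto simp: algebra_simps)
  then show ?thesis
    unfolding r_ann_def by auto
qed

lemma spow_right_ideal_gen_mult_closed:
  "z \<in> spow (right_ideal_gen x) n \<Longrightarrow> z * r \<in> spow (right_ideal_gen x) n"
proof (induction "right_ideal_gen x" n arbitrary: z r rule: spow.induct)
  case 1
  then show ?case by simp
next
  case 2
  then show ?case by (auto simp: right_ideal_gen_def mult.assoc)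
next
  case (3 n)
  then obtain a b where "z = a * b" "a \<in> right_ideal_gen x" "b \<in> spow (right_ideal_gen x) (Suc n)"
    by auto
  with 3 show ?case by (auto simp: mult.assoc)
qed

lemma rpow_in_spow_right_ideal_gen:
  fixes x u :: "'a::ring"
  assumes "\<And>y. y * u = y"
  shows "n \<ge> 1 \<Longrightarrow> rpow x n \<in> spow (right_ideal_gen x) n"
proof (induction x n rule: rpow.induct)
  case (1 x)
  then show ?case by simp
next
  case (2 x)
  have "x = x * u"
    using assms by simp
  then show ?case
    by (auto simp: right_ideal_gen_def)
next
  case (3 x n)
  have "x \<in> right_ideal_gen x"
    using assms by (auto simp: right_ideal_gen_def intro!: exI[of _ u])
  with 3 show ?case
    by auto
qed

lemma spow_singleton_zero: "z \<in> spow {0::'a::ring} n \<Longrightarrow> z = 0"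
  by (induction "{0::'a}" n arbitrary: z rule: spow.induct) auto

lemma r_ann_spow_right_ideal_gen_zero: "r_ann (spow (right_ideal_gen (0::'a::ring)) n) = UNIV"
proof -
  have "right_ideal_gen (0::'a) = {0}"
    by (auto simp: right_ideal_gen_def)
  then show ?thesis
    using spow_singleton_zero by (force simp: r_ann_def)
qed

lemma gen_pq_baer_unity:
  fixes s :: "'a::ring \<Rightarrow> 'a"
  assumes "is_involution s" and "gen_pq_baer s"
  obtains u :: 'a where "\<And>y. u * y = y" and "\<And>y. y * u = y"
proof -
  obtain n u where u: "is_projection s u"
    and "r_ann (spow (right_ideal_gen (0::'a)) n) = right_ideal_gen u"
    using assms(2) unfolding gen_pq_baer_def by blast
  then have "right_ideal_gen u = UNIV"
    by (simp add: r_ann_spow_right_ideal_gen_zero)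
  then have left: "u * y = y" for y
    using right_ideal_gen_idempotent_iff u by (metis UNIV_I is_projection_def)
  have "s (u * s y) = y" for y
    using assms(1) left unfolding is_involution_def by simp
  then have right: "y * u = y" for y
    using assms(1) u unfolding is_involution_def is_projection_def by metis
  show thesis
    by (rule that[OF left right])
qed

text \<open>If rS = eR and S is closed under right multiplication, then rS is also a left ideal,
  so Re \<subseteq> eR gives re = ere; applying the involution yields er = ere as well.\<close>
lemma r_ann_projection_central:
  assumes "is_involution s" and "is_projection s e"
    and closed: "\<And>z r. z \<in> S \<Longrightarrow> z * r \<in> S"
    and ann: "r_ann S = right_ideal_gen e"
  shows "is_central e"
proof -
  have idem: "e * e = e" and sym: "s e = e"
    using assms(2) by (auto simp: is_projection_def)
  have e_ann: "e \<in> r_ann S"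
    using ann right_ideal_gen_idempotent_iff[OF idem] idem by auto
  have sandwich: "r * e = e * r * e" for r
  proof -
    have "r * e \<in> r_ann S"
      using e_ann closed by (fastforce simp: r_ann_def mult.assoc[symmetric])
    then show ?thesis
      using ann right_ideal_gen_idempotent_iff[OF idem] by (simp add: mult.assoc)
  qed
  show ?thesis
    unfolding is_central_def
  proof
    fix a
    have "s (s a * e) = s (e * s a * e)"
      using sandwich[of "s a"] by simp
    then have "e * a = e * a * e"
      using assms(1) sym idem unfolding is_involution_def by (simp add: mult.assoc)
    then show "e * a = a * e"
      using sandwich[of a] by simp
  qed
qed

lemma gen_pq_baer_imp_weakly_gen_pq_baer:
  fixes s :: "'a::ring \<Rightarrow> 'a"
  assumes inv: "is_involution s" and "gen_pq_baer s"
  shows "weakly_gen_pq_baer s"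
  unfolding weakly_gen_pq_baer_def
proof
  fix x
  obtain u :: 'a where left: "\<And>y. u * y = y" and right: "\<And>y. y * u = y"
    by (metis gen_pq_baer_unity[OF assms])
  obtain n e where n: "n \<ge> 1" and e: "is_projection s e"
    and ann: "r_ann (spow (right_ideal_gen x) n) = right_ideal_gen e"
    using assms(2) unfolding gen_pq_baer_def by blast
  have idem: "e * e = e"
    using e by (simp add: is_projection_def)
  have "rpow x n * e = 0"
    using ann right_ideal_gen_idempotent_iff[OF idem] idem
      rpow_in_spow_right_ideal_gen[OF right n] by (auto simp: r_ann_def)
  then have "rpow x n * (u - e) = rpow x n"
    using right by (simp add: algebra_simps)
  moreover have "is_central (u - e)"
    using central_complement[OF left right]
      r_ann_projection_central[OF inv e spow_right_ideal_gen_mult_closed ann] .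
  ultimately show "\<exists>f n. n \<ge> 1 \<and> is_projection s f \<and> is_central f \<and> rpow x n * f = rpow x n \<and>
      (\<forall>y. (\<forall>a\<in>spow (right_ideal_gen x) n. a * y = 0) \<longleftrightarrow> f * y = 0)"
    using n projection_complement[OF inv left right e]
      ann[unfolded r_ann_eq_right_ideal_gen_iff[OF left idem]] by blast
qed

lemma weakly_gen_pq_baer_imp_gen_pq_baer:
  fixes s :: "'a::ring \<Rightarrow> 'a" and u :: 'a
  assumes inv: "is_involution s" and "weakly_gen_pq_baer s"
    and left: "\<And>y. u * y = y" and right: "\<And>y. y * u = y"
  shows "gen_pq_baer s"
  unfolding gen_pq_baer_def
proof
  fix x
  obtain f n where n: "n \<ge> 1" and f: "is_projection s f"
    and ann: "\<forall>y. (\<forall>a\<in>spow (right_ideal_gen x) n. a * y = 0) \<longleftrightarrow> f * y = 0"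
    using assms(2) unfolding weakly_gen_pq_baer_def by blast
  have "u - (u - f) = f"
    by simp
  moreover have e: "is_projection s (u - f)"
    using projection_complement[OF inv left right f] .
  ultimately have "r_ann (spow (right_ideal_gen x) n) = right_ideal_gen (u - f)"
    using r_ann_eq_right_ideal_gen_iff[OF left] ann by (simp add: is_projection_def)
  with n e show "\<exists>n e. n \<ge> 1 \<and> is_projection s e \<and>
      r_ann (spow (right_ideal_gen x) n) = right_ideal_gen e"
    by blast
qed

theorem mainTheorem9:
  fixes s :: "'a::ring \<Rightarrow> 'a"
  assumes "is_involution s"
  shows "gen_pq_baer s \<longleftrightarrow> (weakly_gen_pq_baer s \<and> has_unity TYPE('a))"
proof
  assume G: "gen_pq_baer s"
  obtain u :: 'a where "\<And>y. u * y = y" and "\<And>y. y * u = y"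
    by (metis gen_pq_baer_unity[OF assms G])
  then have "has_unity TYPE('a)"
    by (auto simp: has_unity_def)
  with gen_pq_baer_imp_weakly_gen_pq_baer[OF assms G]
  show "weakly_gen_pq_baer s \<and> has_unity TYPE('a)" ..
next
  assume W: "weakly_gen_pq_baer s \<and> has_unity TYPE('a)"
  then obtain u :: 'a where "\<forall>y. u * y = y \<and> y * u = y"
    by (auto simp: has_unity_def)
  then show "gen_pq_baer s"
    using weakly_gen_pq_baer_imp_gen_pq_baer[OF assms] W by blast
qed

end
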